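(* Let $A_1,\ldots,A_m\in\mathbb{M}_n^+$ and $\lambda_1,\ldots,\lambda_m>0$ with $\sum_{i=1}^m\lambda_i=1$. Let $p>1$ and $q$ be defined by $p^{-1}+q^{-1}=1$. Then for every symmetric norm $\|\cdot\|$ on $\mathbb{M}_n$ and every non-decreasing geometrically convex function $g$, $$\Big\|g\Big(\sum_{i=1}^m\lambda_iA_i\Big)\Big\|\le \|g(I)\|^{1/q}\cdot\Big\|g\Big(\sum_{i=1}^m\lambda_iA_i^p\Big)\Big\|^{1/p}.$$
   Context: $\mathbb{M}_n$ denotes the space of $n\times n$ complex matrices and $\mathbb{M}_n^+$ its positive semidefinite cone; $I$ is the identity matrix. A symmetric norm on $\mathbb{M}_n$ is a norm satisfying $\|UAV\|=\|A\|$ for all $A\in\mathbb{M}_n$ and all unitary $U,V$. A function $g:[0,\infty)\to[0,\infty)$ is geometrically convex if it is continuous, non-negative, and $g(\sqrt{ab})\le\sqrt{g(a)g(b)}$ for all $a,b>0$; $g$ is applied to positive semidefinite matrices by functional calculus. *)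

theory Defs
  imports "HOL-Analysis.Analysis"
begin

type_synonym 'n cmat = "complex^'n^'n"

definition adjoint_mat :: "'n::finite cmat \<Rightarrow> 'n cmat" where
  "adjoint_mat A = (\<chi> i j. cnj (A $ j $ i))"

definition unitary_mat :: "'n::finite cmat \<Rightarrow> bool" where
  "unitary_mat U \<longleftrightarrow> U ** adjoint_mat U = mat 1 \<and> adjoint_mat U ** U = mat 1"

definition cscale_mat :: "complex \<Rightarrow> 'n::finite cmat \<Rightarrow> 'n cmat" where
  "cscale_mat c A = (\<chi> i j. c * A $ i $ j)"

definition psd :: "'n::finite cmat \<Rightarrow> bool" where
  "psd A \<longleftrightarrow> (\<forall>x::complex^'n.
     let q = (\<Sum>i\<in>UNIV. cnj (x $ i) * (A *v x) $ i) in Im q = 0 \<and> Re q \<ge> 0)"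

definition real_diag :: "('n::finite \<Rightarrow> real) \<Rightarrow> 'n cmat" where
  "real_diag d = (\<chi> i j. if i = j then complex_of_real (d i) else 0)"

definition matfun :: "(real \<Rightarrow> real) \<Rightarrow> 'n::finite cmat \<Rightarrow> 'n cmat" where
  "matfun g A = (SOME B. \<exists>U d. unitary_mat U \<and> (\<forall>i. d i \<ge> 0) \<and>
       A = U ** real_diag d ** adjoint_mat U \<and> B = U ** real_diag (\<lambda>i. g (d i)) ** adjoint_mat U)"

definition mat_powr :: "'n::finite cmat \<Rightarrow> real \<Rightarrow> 'n cmat" where
  "mat_powr A p = matfun (\<lambda>t. t powr p) A"

definition symmetric_norm :: "('n::finite cmat \<Rightarrow> real) \<Rightarrow> bool" where
  "symmetric_norm N \<longleftrightarrow>
     (\<forall>A. N A \<ge> 0) \<and> (\<forall>A. N A = 0 \<longleftrightarrow> A = 0) \<and>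
     (\<forall>A B. N (A + B) \<le> N A + N B) \<and>
     (\<forall>c A. N (cscale_mat c A) = cmod c * N A) \<and>
     (\<forall>A U V. unitary_mat U \<longrightarrow> unitary_mat V \<longrightarrow> N (U ** A ** V) = N A)"

definition geom_convex :: "(real \<Rightarrow> real) \<Rightarrow> bool" where
  "geom_convex g \<longleftrightarrow> continuous_on {0..} g \<and> (\<forall>x\<ge>0. g x \<ge> 0) \<and>
     (\<forall>a b. a > 0 \<longrightarrow> b > 0 \<longrightarrow> g (sqrt (a * b)) \<le> sqrt (g a * g b))"

end

theory Submission
  imports Defs
begin

text \<open>
  A symmetric norm is unitarily invariant, so everything can be reduced to eigenvalues.
  Put \<open>S = \<Sum>\<lambda>\<^sub>i A\<^sub>i\<close> and \<open>P = \<Sum>\<lambda>\<^sub>i A\<^sub>i\<^sup>p\<close>. For a unit vector \<open>x\<close>, Jensen's inequality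
  for the spectral distribution of each \<open>A\<^sub>i\<close> and the power mean inequality give
  \<open>\<langle>x, S x\<rangle> \<le> \<langle>x, P x\<rangle>\<^bsup>1/p\<^esup>\<close>, so by the min-max principle the decreasingly ordered
  eigenvalues satisfy \<open>s\<^sub>k \<le> t\<^sub>k\<^bsup>1/p\<^esup>\<close>. Since \<open>g \<circ> exp\<close> is log-convex and \<open>g\<close> is
  monotone, \<open>g(s\<^sub>k) \<le> g(1)\<^bsup>1/q\<^esup> g(t\<^sub>k)\<^bsup>1/p\<^esup>\<close>. Finally, a symmetric norm is monotone on
  non-negative diagonal matrices, and Young's inequality applied entrywise after normalising
  by the two norms gives \<open>\<parallel>diag(a\<^bsup>1/q\<^esup> b\<^bsup>1/p\<^esup>)\<parallel> \<le> \<parallel>diag a\<parallel>\<^bsup>1/q\<^esup> \<parallel>diag b\<parallel>\<^bsup>1/p\<^esup>\<close>.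
\<close>

definition cinner :: "complex^'n::finite \<Rightarrow> complex^'n \<Rightarrow> complex" where
  "cinner x y = (\<Sum>i\<in>UNIV. cnj (x$i) * y$i)"

lemma cinner_add_right: "cinner x (y + z) = cinner x y + cinner x z"
  by (simp add: cinner_def distrib_left sum.distrib)

lemma cinner_add_left: "cinner (x + y) z = cinner x z + cinner y z"
  by (simp add: cinner_def distrib_right sum.distrib)

lemma cinner_diff_right: "cinner x (y - z) = cinner x y - cinner x z"
  by (simp add: cinner_def right_diff_distrib sum_subtractf)

lemma cinner_scale_right: "cinner x (c *s y) = c * cinner x y"
  by (simp add: cinner_def sum_distrib_left mult_ac)

lemma cinner_scale_left: "cinner (c *s x) y = cnj c * cinner x y"
  by (simp add: cinner_def sum_distrib_left mult_ac)

lemma cinner_zero_right [simp]: "cinner x 0 = 0"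
  by (simp add: cinner_def)

lemma cinner_zero_left [simp]: "cinner 0 x = 0"
  by (simp add: cinner_def)

lemma cinner_commute: "cinner y x = cnj (cinner x y)"
  by (simp add: cinner_def mult.commute)

lemma cinner_sum_right: "cinner x (\<Sum>j\<in>S. f j) = (\<Sum>j\<in>S. cinner x (f j))"
  by (induct S rule: infinite_finite_induct) (auto simp: cinner_add_right)

lemma cinner_sum_left: "cinner (\<Sum>j\<in>S. f j) x = (\<Sum>j\<in>S. cinner (f j) x)"
  by (induct S rule: infinite_finite_induct) (auto simp: cinner_add_left)

lemma cnj_mult_self: "cnj c * c = complex_of_real ((cmod c)\<^sup>2)"
  by (metis complex_norm_square mult.commute)

lemma cinner_self: "cinner x x = complex_of_real ((norm x)\<^sup>2)"
proof -
  have "cinner x x = complex_of_real (\<Sum>i\<in>UNIV. (cmod (x$i))\<^sup>2)"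
    unfolding cinner_def of_real_sum by (intro sum.cong refl) (simp only: cnj_mult_self)
  thus ?thesis by (simp add: norm_vec_def L2_set_def sum_nonneg)
qed

lemma Re_cinner_self [simp]: "Re (cinner x x) = (norm x)\<^sup>2"
  and Im_cinner_self [simp]: "Im (cinner x x) = 0"
  by (simp_all add: cinner_self)

lemma cinner_self_eq_1_iff: "cinner x x = 1 \<longleftrightarrow> norm x = 1"
proof -
  have "cinner x x = 1 \<longleftrightarrow> (norm x)\<^sup>2 = 1" by (simp only: cinner_self of_real_eq_1_iff)
  also have "\<dots> \<longleftrightarrow> norm x = 1" using norm_ge_zero[of x] by (smt (verit) power2_eq_1_iff)
  finally show ?thesis .
qed

lemma cinner_scale_self: "cinner (c *s x) (c *s x) = complex_of_real ((cmod c)\<^sup>2) * cinner x x"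
proof -
  have "cinner (c *s x) (c *s x) = (cnj c * c) * cinner x x"
    by (simp add: cinner_scale_left cinner_scale_right mult.assoc)
  thus ?thesis by (simp only: cnj_mult_self)
qed

lemma cinner_normalize_self:
  assumes "x \<noteq> 0"
  shows "cinner (complex_of_real (1 / norm x) *s x) (complex_of_real (1 / norm x) *s x) = 1"
proof -
  have "cinner (complex_of_real (1 / norm x) *s x) (complex_of_real (1 / norm x) *s x)
      = complex_of_real ((1 / norm x)\<^sup>2 * (norm x)\<^sup>2)"
    unfolding cinner_scale_self by (simp only: cinner_self norm_of_real power2_abs of_real_mult)
  thus ?thesis using assms by (simp add: power_divide)
qed

lemma cinner_axis: "cinner (axis r 1) v = v $ r"
proof -
  have "\<And>i. cnj (axis r 1 $ i) * v $ i = (if i = r then v $ r else 0)"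
    by (simp add: axis_def)
  thus ?thesis by (simp add: cinner_def)
qed

lemma continuous_on_cinner:
  assumes "continuous_on S F" "continuous_on S G"
  shows "continuous_on S (\<lambda>x. cinner (F x) (G x))"
proof -
  have "continuous_on S (\<lambda>x. H x $ i)" if "continuous_on S H" for H :: "_ \<Rightarrow> complex^'n" and i
    by (rule continuous_on_compose2[OF linear_continuous_on[OF bounded_linear_vec_nth] that]) auto
  thus ?thesis unfolding cinner_def by (intro continuous_intros assms)
qed

lemma matrix_vector_mult_sum: "(A::complex^'n::finite^'n) *v (\<Sum>i\<in>S. f i) = (\<Sum>i\<in>S. A *v f i)"
  by (induct S rule: infinite_finite_induct) (auto simp: matrix_vector_right_distrib)

lemma matrix_sum_vector_mult: "(\<Sum>i\<in>S. (A i::complex^'n::finite^'n)) *v x = (\<Sum>i\<in>S. A i *v x)"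
  by (induct S rule: infinite_finite_induct) (auto simp: matrix_vector_mult_add_rdistrib)

lemma matrix_scaleR_vector_mult:
  "(r *\<^sub>R (A::complex^'n::finite^'n)) *v x = complex_of_real r *s (A *v x)"
proof -
  have "(r *\<^sub>R A)$i$j = complex_of_real r * A$i$j" for i j
    by (simp add: scaleR_conv_of_real[symmetric])
  thus ?thesis by (simp add: matrix_vector_mult_def vec_eq_iff sum_distrib_left mult.assoc)
qed

lemma matrix_vector_mult_axis: "((B::complex^'n::finite^'n) *v axis c 1) $ r = B $ r $ c"
proof -
  have "\<And>i. B $ r $ i * axis c 1 $ i = (if i = c then B $ r $ c else 0)"
    by (simp add: axis_def)
  thus ?thesis by (simp add: matrix_vector_mult_def)
qed

lemma cinner_adjoint_mat: "cinner x (A *v y) = cinner (adjoint_mat A *v x) y"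
  unfolding cinner_def matrix_vector_mult_def adjoint_mat_def
  by (simp add: sum_distrib_left sum_distrib_right) (subst sum.swap, simp add: mult_ac)

lemma adjoint_mat_adjoint_mat [simp]: "adjoint_mat (adjoint_mat A) = A"
  unfolding adjoint_mat_def by (simp add: vec_eq_iff)

lemma adjoint_mat_1 [simp]: "adjoint_mat (mat 1) = mat 1"
  unfolding adjoint_mat_def mat_def by (simp add: vec_eq_iff)

lemma unitary_mat_adjoint_mat: "unitary_mat U \<Longrightarrow> unitary_mat (adjoint_mat U)"
  unfolding unitary_mat_def by simp

lemma unitary_mat_1: "unitary_mat (mat 1)"
  unfolding unitary_mat_def by simp

lemma unitary_mat_cinner: "unitary_mat U \<Longrightarrow> cinner (U *v x) (U *v y) = cinner x y"
  by (simp add: cinner_adjoint_mat matrix_vector_mul_assoc unitary_mat_def)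

lemma cinner_matrix_eq_0:
  assumes "\<And>x. cinner x (B *v x) = 0"
  shows "B = 0"
proof -
  have polar: "cinner x (B *v y) = 0" for x y
  proof -
    let ?a = "cinner x (B *v y)" and ?b = "cinner y (B *v x)"
    have "cinner (x + y) (B *v (x + y)) = 0" by (rule assms)
    hence sum: "?a + ?b = 0"
      using assms[of x] assms[of y]
      by (simp add: matrix_vector_right_distrib cinner_add_left cinner_add_right add.commute)
    have "cinner (x + \<i> *s y) (B *v (x + \<i> *s y)) = 0" by (rule assms)
    hence "\<i> * ?a - \<i> * ?b = 0"
      using assms[of x] assms[of y]
      by (simp add: matrix_vector_right_distrib vector_scalar_commute cinner_add_left
          cinner_add_right cinner_scale_left cinner_scale_right)
    hence "?a - ?b = 0" by (metis complex_i_not_zero mult_eq_0_iff right_diff_distrib)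
    with sum show ?thesis by (simp add: algebra_simps)
  qed
  show ?thesis
    using polar[of "axis _ 1" "axis _ 1"] by (simp add: vec_eq_iff cinner_axis matrix_vector_mult_axis)
qed

definition hermitian :: "complex^'n^'n \<Rightarrow> bool" where
  "hermitian H \<longleftrightarrow> adjoint_mat H = H"

definition quad_form :: "complex^'n^'n \<Rightarrow> complex^'n::finite \<Rightarrow> real" where
  "quad_form H x = Re (cinner x (H *v x))"

lemma psd_iff_cinner: "psd A \<longleftrightarrow> (\<forall>x. Im (cinner x (A *v x)) = 0 \<and> Re (cinner x (A *v x)) \<ge> 0)"
  unfolding psd_def cinner_def Let_def by simp

lemma psd_quad_form_nonneg: "psd A \<Longrightarrow> quad_form A x \<ge> 0"
  unfolding psd_iff_cinner quad_form_def by simp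

lemma psd_imp_hermitian:
  assumes "psd A"
  shows "hermitian A"
proof -
  have "cinner x ((A - adjoint_mat A) *v x) = 0" for x
  proof -
    let ?q = "cinner x (A *v x)"
    have "cinner x ((A - adjoint_mat A) *v x) = ?q - cinner (A *v x) x"
      using cinner_adjoint_mat[of x "adjoint_mat A" x]
      by (simp add: matrix_vector_mult_diff_rdistrib cinner_diff_right)
    also have "cinner (A *v x) x = cnj ?q" by (rule cinner_commute)
    finally show ?thesis using assms by (simp add: psd_iff_cinner complex_eq_iff)
  qed
  hence "A - adjoint_mat A = 0" by (rule cinner_matrix_eq_0)
  thus ?thesis unfolding hermitian_def by simp
qed

lemma hermitian_cinner: "hermitian H \<Longrightarrow> cinner x (H *v y) = cinner (H *v x) y"
  unfolding hermitian_def by (metis cinner_adjoint_mat)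

lemma quad_form_scale: "quad_form H (c *s x) = (cmod c)\<^sup>2 * quad_form H x"
proof -
  have "cinner (c *s x) (H *v (c *s x)) = (cnj c * c) * cinner x (H *v x)"
    by (simp add: vector_scalar_commute cinner_scale_left cinner_scale_right mult.assoc)
  hence "cinner (c *s x) (H *v (c *s x)) = complex_of_real ((cmod c)\<^sup>2) * cinner x (H *v x)"
    by (simp only: cnj_mult_self)
  thus ?thesis unfolding quad_form_def by simp
qed

lemma quad_form_zero [simp]: "quad_form H 0 = 0"
  unfolding quad_form_def by simp

lemma quad_form_1 [simp]: "quad_form (mat 1) x = (norm x)\<^sup>2"
  unfolding quad_form_def by simp

lemma quad_form_add_scale:
  assumes "hermitian H"
  shows "quad_form H (x + complex_of_real t *s y)
    = quad_form H x + 2 * t * Re (cinner y (H *v x)) + t\<^sup>2 * quad_form H y"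
proof -
  let ?t = "complex_of_real t"
  have swap: "cinner x (H *v y) = cnj (cinner y (H *v x))"
    using hermitian_cinner[OF assms, of x y] cinner_commute[of "H *v x" y] by simp
  have "cinner (x + ?t *s y) (H *v (x + ?t *s y)) = cinner x (H *v x) + ?t * cinner x (H *v y)
      + ?t * cinner y (H *v x) + ?t * ?t * cinner y (H *v y)"
    by (simp add: matrix_vector_right_distrib vector_scalar_commute cinner_add_left cinner_add_right
        cinner_scale_left cinner_scale_right algebra_simps)
  thus ?thesis using swap unfolding quad_form_def by (simp add: power2_eq_square)
qed

lemma quad_form_sum_scaleR:
  "quad_form (\<Sum>i\<in>I. l i *\<^sub>R B i) x = (\<Sum>i\<in>I. l i * quad_form (B i) x)"
  unfolding quad_form_def
  by (simp add: matrix_sum_vector_mult matrix_scaleR_vector_mult cinner_sum_right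
      cinner_scale_right Re_sum)

lemma psd_sum_scaleR:
  assumes "\<forall>i\<in>I. psd (B i)" "\<forall>i\<in>I. l i \<ge> 0"
  shows "psd (\<Sum>i\<in>I. l i *\<^sub>R B i)"
  using assms unfolding psd_iff_cinner
  by (auto simp: matrix_sum_vector_mult matrix_scaleR_vector_mult cinner_sum_right
      cinner_scale_right Re_sum Im_sum intro!: sum_nonneg sum.neutral)

definition orthonormal_set :: "(complex^'n::finite) set \<Rightarrow> bool" where
  "orthonormal_set B \<longleftrightarrow> (\<forall>x\<in>B. \<forall>y\<in>B. cinner x y = (if x = y then 1 else 0))"

lemma orthonormal_set_image:
  fixes u :: "nat \<Rightarrow> complex^'n::finite"
  assumes "\<forall>i<k. \<forall>j<k. cinner (u i) (u j) = (if i = j then 1 else 0)"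
  shows "inj_on u {..<k}" "orthonormal_set (u ` {..<k})"
proof -
  show inj: "inj_on u {..<k}"
    by (rule inj_onI) (metis assms lessThan_iff one_neq_zero)
  show "orthonormal_set (u ` {..<k})"
    unfolding orthonormal_set_def using assms inj by (auto simp: inj_on_def)
qed

lemma orthonormal_set_cinner_sum:
  assumes "orthonormal_set B" "finite B" "x \<in> B"
  shows "cinner x (\<Sum>y\<in>B. f y *s y) = f x"
proof -
  have "cinner x (\<Sum>y\<in>B. f y *s y) = (\<Sum>y\<in>B. if y = x then f x else 0)"
    using assms(1,3) unfolding orthonormal_set_def
    by (auto simp: cinner_sum_right cinner_scale_right intro: sum.cong)
  thus ?thesis using assms(2,3) by simp
qed

lemma orthonormal_set_independent:
  assumes "orthonormal_set B" "finite B"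
  shows "vec.independent B"
proof (rule vec.independent_if_scalars_zero[OF assms(2)])
  fix f x assume "(\<Sum>x\<in>B. f x *s x) = 0" "x \<in> B"
  thus "f x = 0" using orthonormal_set_cinner_sum[OF assms, of x f] by simp
qed

lemma orthonormal_set_span_expansion:
  assumes "orthonormal_set B" "finite B" "z \<in> vec.span B"
  shows "z = (\<Sum>b\<in>B. cinner b z *s b)"
  using assms(3)
proof (induct rule: vec.span_induct_alt)
  case (step c x y)
  have "(\<Sum>b\<in>B. (c * cinner b x) *s b) = (\<Sum>b\<in>B. if b = x then c *s x else 0)"
    using assms(1) step(1) unfolding orthonormal_set_def by (intro sum.cong refl) auto
  hence "(\<Sum>b\<in>B. (c * cinner b x) *s b) = c *s x" using assms(2) step(1) by simp
  moreover have "(\<Sum>b\<in>B. cinner b (c *s x + y) *s b)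
      = (\<Sum>b\<in>B. (c * cinner b x) *s b) + (\<Sum>b\<in>B. cinner b y *s b)"
    by (simp add: cinner_add_right cinner_scale_right vector_sadd_rdistrib sum.distrib)
  ultimately show ?case using step(2) by simp
qed simp

text \<open>The orthogonal projection onto \<open>span B\<close> is a linear map with image of dimension at most
  \<open>card B\<close>, so it is not injective on a subspace of larger dimension.\<close>
lemma subspace_has_orthogonal_vector:
  assumes on: "orthonormal_set B" and fin: "finite B" and W: "vec.subspace W"
    and dim: "card B < vec.dim W"
  shows "\<exists>x\<in>W. x \<noteq> 0 \<and> (\<forall>b\<in>B. cinner b x = 0)"
proof -
  define proj where "proj x = (\<Sum>b\<in>B. cinner b x *s b)" for x
  have lin: "Vector_Spaces.linear (*s) (*s) proj"
    unfolding Vector_Spaces.linear_iff proj_def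
    by (simp add: vec.vector_space_axioms cinner_add_right cinner_scale_right vector_sadd_rdistrib
        sum.distrib vec.scale_sum_right vector_smult_assoc)
  have "proj ` W \<subseteq> vec.span B"
    unfolding proj_def by (intro image_subsetI vec.span_sum vec.span_scale vec.span_base)
  hence "vec.dim (proj ` W) \<le> card B" using vec.dim_le_card fin by blast
  hence "\<not> inj_on proj (vec.span W)"
    using vec.dim_image_eq[OF lin, of W] dim by auto
  hence "\<not> inj_on proj W" using W by (metis vec.span_eq_iff)
  then obtain x y where xy: "x \<in> W" "y \<in> W" "x \<noteq> y" "proj x = proj y"
    unfolding inj_on_def by blast
  have "proj (x - y) = 0"
    using xy(4) unfolding proj_def by (simp add: cinner_diff_right vector_sub_rdistrib sum_subtractf)
  hence "cinner b (x - y) = 0" if "b \<in> B" for b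
    using orthonormal_set_cinner_sum[OF on fin that, of "\<lambda>c. cinner c (x - y)"] by (simp add: proj_def)
  thus ?thesis using vec.subspace_diff[OF W xy(1,2)] xy(3) by (metis right_minus_eq)
qed

section \<open>The variational spectral theorem\<close>

lemma linear_plus_quadratic_nonpos_imp_zero:
  fixes a b :: real
  assumes "\<And>t. a * t + b * t\<^sup>2 \<le> 0"
  shows "a = 0"
proof (rule ccontr)
  assume a: "a \<noteq> 0"
  define c where "c = \<bar>b\<bar> + 1"
  have c: "c \<ge> 1" "\<bar>b\<bar> \<le> c" unfolding c_def by simp_all
  define t where "t = a / (2 * c)"
  have "a * t + b * t\<^sup>2 \<ge> a\<^sup>2 / (2 * c) - c * (a\<^sup>2 / (4 * c\<^sup>2))"
  proof -
    have "- c * (a\<^sup>2 / (4 * c\<^sup>2)) \<le> b * (a\<^sup>2 / (4 * c\<^sup>2))"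
      using c(2) by (intro mult_right_mono) auto
    thus ?thesis unfolding t_def by (simp add: power2_eq_square power_divide)
  qed
  moreover have "c * (a\<^sup>2 / (4 * c\<^sup>2)) = a\<^sup>2 / (4 * c)"
    using c by (simp add: power2_eq_square)
  moreover have "a\<^sup>2 / (4 * c) > 0" using a c by simp
  ultimately have "a * t + b * t\<^sup>2 > 0" by simp
  with assms[of t] show False by simp
qed

lemma quad_form_attains_max_orthogonal:
  fixes B :: "(complex^'n::finite) set"
  assumes on: "orthonormal_set B" and fin: "finite B" and card: "card B < CARD('n)"
  shows "\<exists>x. (\<forall>b\<in>B. cinner b x = 0) \<and> cinner x x = 1 \<and>
    (\<forall>y. (\<forall>b\<in>B. cinner b y = 0) \<and> cinner y y = 1 \<longrightarrow> quad_form H y \<le> quad_form H x)"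
proof -
  define K where "K = {x::complex^'n. (\<forall>b\<in>B. cinner b x = 0) \<and> cinner x x = 1}"
  have "K = (\<Inter>b\<in>B. {x. cinner b x = 0}) \<inter> {x. cinner x x = 1}"
    unfolding K_def by auto
  hence "closed K"
    by (simp only:) (intro closed_Int closed_INT ballI closed_Collect_eq continuous_on_cinner
        continuous_on_const continuous_on_id)
  moreover have "K \<subseteq> cball 0 1"
    unfolding K_def by (auto simp: cinner_self_eq_1_iff)
  ultimately have "compact K"
    using bounded_subset[OF bounded_cball] by (simp add: compact_eq_bounded_closed)
  obtain z :: "complex^'n" where z: "z \<noteq> 0" "\<forall>b\<in>B. cinner b z = 0"
    using subspace_has_orthogonal_vector[OF on fin vec.subspace_UNIV] card
      vec_dim_card[where 'a=complex and 'n='n] by auto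
  hence "complex_of_real (1 / norm z) *s z \<in> K"
    unfolding K_def using cinner_normalize_self[OF z(1)] by (simp add: cinner_scale_right)
  hence "K \<noteq> {}" by blast
  moreover have "continuous_on K (quad_form H)"
    unfolding quad_form_def[abs_def] by (intro continuous_intros continuous_on_cinner continuous_on_id)
  ultimately obtain x where "x \<in> K" "\<forall>y\<in>K. quad_form H y \<le> quad_form H x"
    using continuous_attains_sup[OF \<open>compact K\<close>] by blast
  thus ?thesis unfolding K_def by blast
qed

lemma quad_form_orthogonal_le_norm_sq:
  assumes max: "\<forall>y. (\<forall>b\<in>B. cinner b y = 0) \<and> cinner y y = 1 \<longrightarrow> quad_form H y \<le> \<mu>"
    and v: "\<forall>b\<in>B. cinner b v = 0"
  shows "quad_form H v \<le> \<mu> * (norm v)\<^sup>2"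
proof (cases "v = 0")
  case False
  define w where "w = complex_of_real (1 / norm v) *s v"
  have "quad_form H w \<le> \<mu>"
    using max v cinner_normalize_self[OF False] unfolding w_def by (simp add: cinner_scale_right)
  moreover have "quad_form H w = (1 / norm v)\<^sup>2 * quad_form H v"
    unfolding w_def quad_form_scale by (simp add: norm_divide)
  ultimately show ?thesis using False by (simp add: power_divide field_simps)
qed simp

text \<open>A maximiser of the Rayleigh quotient on the orthogonal complement of an \<open>H\<close>-invariant
  orthonormal set is an eigenvector: the first variation \<open>x + t y\<close> in any direction \<open>y\<close> of the
  complement forces \<open>H x - \<mu> x \<bottom> y\<close>, and \<open>H x - \<mu> x\<close> itself lies in the complement.\<close>
lemma max_quad_form_orthogonal_is_eigenvector:
  assumes h: "hermitian H"
    and eigB: "\<forall>b\<in>B. \<exists>c. H *v b = c *s b"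
    and xB: "\<forall>b\<in>B. cinner b x = 0" and x1: "cinner x x = 1"
    and xmax: "\<forall>y. (\<forall>b\<in>B. cinner b y = 0) \<and> cinner y y = 1 \<longrightarrow> quad_form H y \<le> quad_form H x"
  shows "H *v x = complex_of_real (quad_form H x) *s x"
proof -
  define \<mu> where "\<mu> = quad_form H x"
  have bound: "quad_form H v \<le> \<mu> * (norm v)\<^sup>2" if "\<forall>b\<in>B. cinner b v = 0" for v
    using quad_form_orthogonal_le_norm_sq[OF xmax that] unfolding \<mu>_def .
  have nx: "(norm x)\<^sup>2 = 1" using x1 by (simp add: cinner_self_eq_1_iff)
  have first_variation: "Re (cinner y (H *v x)) = \<mu> * Re (cinner y x)"
    if yB: "\<forall>b\<in>B. cinner b y = 0" for y
  proof -
    have "(2 * Re (cinner y (H *v x)) - 2 * \<mu> * Re (cinner y x)) * t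
        + (quad_form H y - \<mu> * (norm y)\<^sup>2) * t\<^sup>2 \<le> 0" for t
    proof -
      let ?v = "x + complex_of_real t *s y"
      have "\<forall>b\<in>B. cinner b ?v = 0" using xB yB by (simp add: cinner_add_right cinner_scale_right)
      hence "quad_form H ?v \<le> \<mu> * (norm ?v)\<^sup>2" by (rule bound)
      moreover have "(norm ?v)\<^sup>2 = 1 + 2 * t * Re (cinner y x) + t\<^sup>2 * (norm y)\<^sup>2"
        using quad_form_add_scale[of "mat 1" x t y] nx by (simp add: hermitian_def)
      ultimately show ?thesis
        using quad_form_add_scale[OF h, of x t y] unfolding \<mu>_def by (simp add: algebra_simps)
    qed
    from linear_plus_quadratic_nonpos_imp_zero[OF this] show ?thesis by simp
  qed
  define y where "y = H *v x - complex_of_real \<mu> *s x"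
  have "cinner b y = 0" if b: "b \<in> B" for b
  proof -
    obtain c where "H *v b = c *s b" using eigB b by blast
    hence "cinner b (H *v x) = 0"
      using hermitian_cinner[OF h, of b x] xB b by (simp add: cinner_scale_left)
    thus ?thesis unfolding y_def using xB b by (simp add: cinner_diff_right cinner_scale_right)
  qed
  hence "(norm y)\<^sup>2 = 0"
    using first_variation unfolding y_def Re_cinner_self[symmetric]
    by (simp add: y_def cinner_diff_right cinner_scale_right)
  thus ?thesis unfolding y_def \<mu>_def by simp
qed

definition spectral_family ::
  "complex^'n^'n \<Rightarrow> nat \<Rightarrow> (nat \<Rightarrow> complex^'n::finite) \<Rightarrow> (nat \<Rightarrow> real) \<Rightarrow> bool" where
  "spectral_family H k u \<mu> \<longleftrightarrow>
     (\<forall>i<k. \<forall>j<k. cinner (u i) (u j) = (if i = j then 1 else 0)) \<and>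
     (\<forall>i<k. H *v u i = complex_of_real (\<mu> i) *s u i) \<and>
     (\<forall>i<k. \<forall>y. (\<forall>j<i. cinner (u j) y = 0) \<and> cinner y y = 1 \<longrightarrow> quad_form H y \<le> \<mu> i)"

lemma spectral_family_exists:
  assumes h: "hermitian (H::complex^'n::finite^'n)"
  shows "k \<le> CARD('n) \<Longrightarrow> \<exists>u \<mu>. spectral_family H k u \<mu>"
proof (induct k)
  case 0
  then show ?case unfolding spectral_family_def by auto
next
  case (Suc k)
  then obtain u \<mu> where f: "spectral_family H k u \<mu>" by auto
  hence "\<forall>i<k. \<forall>j<k. cinner (u i) (u j) = (if i = j then 1 else 0)"
    unfolding spectral_family_def by blast
  note on = orthonormal_set_image[OF this]
  define B where "B = u ` {..<k}"
  have cardB: "card B < CARD('n)" using card_image[OF on(1)] Suc(2) unfolding B_def by simp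
  have eigB: "\<forall>b\<in>B. \<exists>c. H *v b = c *s b"
    using f unfolding spectral_family_def B_def by auto
  obtain x where xB: "\<forall>b\<in>B. cinner b x = 0" and x1: "cinner x x = 1"
    and xmax: "\<forall>y. (\<forall>b\<in>B. cinner b y = 0) \<and> cinner y y = 1 \<longrightarrow> quad_form H y \<le> quad_form H x"
    using quad_form_attains_max_orthogonal[OF on(2)[folded B_def] _ cardB] unfolding B_def by blast
  have xe: "H *v x = complex_of_real (quad_form H x) *s x"
    by (rule max_quad_form_orthogonal_is_eigenvector[OF h eigB xB x1 xmax])
  have xu: "cinner (u i) x = 0" "cinner x (u i) = 0" if "i < k" for i
    using xB that unfolding B_def by (auto simp: cinner_commute[of x])
  have "spectral_family H (Suc k) (u(k := x)) (\<mu>(k := quad_form H x))"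
    unfolding spectral_family_def
  proof (intro conjI allI impI)
    fix i j assume "i < Suc k" "j < Suc k"
    thus "cinner ((u(k := x)) i) ((u(k := x)) j) = (if i = j then 1 else 0)"
      using f xu x1 unfolding spectral_family_def by (cases "i = k"; cases "j = k") auto
  next
    fix i assume "i < Suc k"
    thus "H *v (u(k := x)) i = complex_of_real ((\<mu>(k := quad_form H x)) i) *s (u(k := x)) i"
      using f xe unfolding spectral_family_def by (cases "i = k") auto
  next
    fix i y assume "i < Suc k" "(\<forall>j<i. cinner ((u(k := x)) j) y = 0) \<and> cinner y y = 1"
    thus "quad_form H y \<le> (\<mu>(k := quad_form H x)) i"
      using f xmax unfolding spectral_family_def B_def by (cases "i = k") auto
  qed
  thus ?case by blast
qed

lemma spectral_family_quad_form:
  assumes "spectral_family H k u \<mu>" "i < k"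
  shows "quad_form H (u i) = \<mu> i"
  using assms unfolding spectral_family_def quad_form_def by (simp add: cinner_scale_right)

lemma spectral_family_antimono:
  assumes f: "spectral_family H k u \<mu>" and "i \<le> j" "j < k"
  shows "\<mu> j \<le> \<mu> i"
proof -
  have "(\<forall>l<i. cinner (u l) (u j) = 0) \<and> cinner (u j) (u j) = 1"
    using f assms unfolding spectral_family_def by auto
  hence "quad_form H (u j) \<le> \<mu> i" using f assms unfolding spectral_family_def by auto
  thus ?thesis using spectral_family_quad_form[OF f \<open>j < k\<close>] by simp
qed

lemma spectral_family_nonneg:
  assumes "spectral_family H k u \<mu>" "psd H" "i < k"
  shows "\<mu> i \<ge> 0"
  using spectral_family_quad_form[OF assms(1,3)] psd_quad_form_nonneg[OF assms(2), of "u i"] by simp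

lemma spectral_family_diagonalizes:
  assumes f: "spectral_family H CARD('n) u \<mu>"
    and ix: "bij_betw ix (UNIV::'n::finite set) {..<CARD('n)}"
  defines "U \<equiv> (\<chi> r c. u (ix c) $ r) :: complex^'n^'n"
  shows "unitary_mat U" "H = U ** real_diag (\<lambda>c. \<mu> (ix c)) ** adjoint_mat U"
proof -
  have ixlt: "ix c < CARD('n)" for c using ix by (auto simp: bij_betw_def)
  have ixinj: "ix c = ix c' \<longleftrightarrow> c = c'" for c c' using ix by (auto simp: bij_betw_def inj_on_def)
  have "(adjoint_mat U ** U) $ c $ c' = cinner (u (ix c)) (u (ix c'))" for c c'
    unfolding matrix_matrix_mult_def adjoint_mat_def U_def cinner_def by simp
  hence UU: "adjoint_mat U ** U = mat 1"
    using f ixlt ixinj unfolding spectral_family_def by (simp add: vec_eq_iff mat_def)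
  hence UU': "U ** adjoint_mat U = mat 1" using matrix_left_right_inverse by blast
  show "unitary_mat U" unfolding unitary_mat_def using UU UU' by simp
  have "(H ** U) $ r $ c = (H *v u (ix c)) $ r" for r c
    unfolding matrix_matrix_mult_def matrix_vector_mult_def U_def by simp
  moreover have "(U ** real_diag (\<lambda>c. \<mu> (ix c))) $ r $ c = U $ r $ c * complex_of_real (\<mu> (ix c))"
    for r c
  proof -
    have "\<And>k. U $ r $ k * real_diag (\<lambda>c. \<mu> (ix c)) $ k $ c
        = (if k = c then U $ r $ c * complex_of_real (\<mu> (ix c)) else 0)"
      unfolding real_diag_def by simp
    thus ?thesis unfolding matrix_matrix_mult_def by simp
  qed
  ultimately have HU: "H ** U = U ** real_diag (\<lambda>c. \<mu> (ix c))"
    using f ixlt unfolding spectral_family_def U_def by (simp add: vec_eq_iff mult.commute)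
  have "H = H ** (U ** adjoint_mat U)" using UU' by simp
  also have "\<dots> = U ** real_diag (\<lambda>c. \<mu> (ix c)) ** adjoint_mat U"
    by (simp add: matrix_mul_assoc HU)
  finally show "H = U ** real_diag (\<lambda>c. \<mu> (ix c)) ** adjoint_mat U" .
qed

section \<open>Functional calculus\<close>

lemma real_diag_mult_right: "(M ** real_diag d) $ i $ j = M $ i $ j * complex_of_real (d j)"
proof -
  have "\<And>k. M $ i $ k * real_diag d $ k $ j = (if k = j then M $ i $ j * complex_of_real (d j) else 0)"
    unfolding real_diag_def by simp
  thus ?thesis unfolding matrix_matrix_mult_def by simp
qed

lemma real_diag_mult_left: "(real_diag d ** M) $ i $ j = complex_of_real (d i) * M $ i $ j"
proof -
  have "\<And>k. real_diag d $ i $ k * M $ k $ j = (if k = i then complex_of_real (d i) * M $ i $ j else 0)"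
    unfolding real_diag_def by simp
  thus ?thesis unfolding matrix_matrix_mult_def by simp
qed

lemma real_diag_mult: "real_diag a ** real_diag b = real_diag (\<lambda>i. a i * b i)"
  by (simp add: vec_eq_iff real_diag_mult_right) (simp add: real_diag_def)

lemma real_diag_lincomb: "a *\<^sub>R real_diag x + b *\<^sub>R real_diag y = real_diag (\<lambda>i. a * x i + b * y i)"
  unfolding real_diag_def by (auto simp: vec_eq_iff of_real_def scaleR_add_left)

lemma real_diag_1: "real_diag (\<lambda>i. 1) = mat 1"
  unfolding real_diag_def mat_def by (simp add: vec_eq_iff)

lemma adjoint_mat_real_diag [simp]: "adjoint_mat (real_diag d) = real_diag d"
  unfolding adjoint_mat_def real_diag_def by (simp add: vec_eq_iff)

lemma real_diag_eq_0_iff: "real_diag d = 0 \<longleftrightarrow> (\<forall>c. d c = 0)"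
  unfolding real_diag_def by (auto simp: vec_eq_iff)

text \<open>Well-definedness of \<open>matfun\<close>: the unitary \<open>W = V\<^sup>* U\<close> intertwines the two diagonal
  matrices, so \<open>W\<^sub>i\<^sub>j \<noteq> 0\<close> only where \<open>d j = e i\<close>, and then it also intertwines \<open>g \<circ> d\<close> and \<open>g \<circ> e\<close>.\<close>
lemma unitary_diag_conj_fun_eq:
  assumes U: "unitary_mat U" and V: "unitary_mat V"
    and eq: "U ** real_diag d ** adjoint_mat U = V ** real_diag e ** adjoint_mat V"
  shows "U ** real_diag (\<lambda>i. g (d i)) ** adjoint_mat U = V ** real_diag (\<lambda>i. g (e i)) ** adjoint_mat V"
proof -
  define W where "W = adjoint_mat V ** U"
  have UU: "adjoint_mat U ** U = mat 1" "U ** adjoint_mat U = mat 1"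
    using U unfolding unitary_mat_def by auto
  have VV: "adjoint_mat V ** V = mat 1" "V ** adjoint_mat V = mat 1"
    using V unfolding unitary_mat_def by auto
  have "W ** real_diag d = adjoint_mat V ** U ** real_diag d ** (adjoint_mat U ** U)"
    unfolding W_def UU by simp
  also have "\<dots> = adjoint_mat V ** (V ** real_diag e ** adjoint_mat V) ** U"
    unfolding eq[symmetric] by (simp only: matrix_mul_assoc)
  also have "\<dots> = real_diag e ** W"
    unfolding W_def by (simp only: matrix_mul_assoc VV matrix_mul_lid)
  finally have WD: "W ** real_diag d = real_diag e ** W" .
  have "(W ** real_diag (\<lambda>i. g (d i))) $ i $ j = (real_diag (\<lambda>i. g (e i)) ** W) $ i $ j" for i j
  proof -
    have "W $ i $ j * complex_of_real (d j) = complex_of_real (e i) * W $ i $ j"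
      using arg_cong[OF WD, of "\<lambda>M. M $ i $ j"] by (simp add: real_diag_mult_right real_diag_mult_left)
    hence "W $ i $ j = 0 \<or> d j = e i" by (auto simp: mult.commute)
    thus ?thesis by (auto simp: real_diag_mult_right real_diag_mult_left mult.commute)
  qed
  hence WG: "W ** real_diag (\<lambda>i. g (d i)) = real_diag (\<lambda>i. g (e i)) ** W"
    by (simp add: vec_eq_iff)
  have UVW: "U = V ** W" unfolding W_def by (simp add: matrix_mul_assoc VV)
  have WU: "W ** adjoint_mat U = adjoint_mat V"
    unfolding W_def by (simp add: UU flip: matrix_mul_assoc)
  have "U ** real_diag (\<lambda>i. g (d i)) ** adjoint_mat U
      = V ** (W ** real_diag (\<lambda>i. g (d i))) ** adjoint_mat U"
    by (subst UVW) (simp only: matrix_mul_assoc)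
  also have "\<dots> = V ** real_diag (\<lambda>i. g (e i)) ** (W ** adjoint_mat U)"
    unfolding WG by (simp only: matrix_mul_assoc)
  finally show ?thesis unfolding WU .
qed

lemma matfun_unitary_diag:
  assumes U: "unitary_mat U" and d: "\<forall>i. d i \<ge> 0" and A: "A = U ** real_diag d ** adjoint_mat U"
  shows "matfun g A = U ** real_diag (\<lambda>i. g (d i)) ** adjoint_mat U"
proof -
  let ?P = "\<lambda>B. \<exists>U d. unitary_mat U \<and> (\<forall>i. d i \<ge> 0) \<and>
       A = U ** real_diag d ** adjoint_mat U \<and> B = U ** real_diag (\<lambda>i. g (d i)) ** adjoint_mat U"
  have "?P (U ** real_diag (\<lambda>i. g (d i)) ** adjoint_mat U)" using U d A by blast
  hence "?P (matfun g A)" unfolding matfun_def by (rule someI)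
  then obtain V e where "unitary_mat V" "A = V ** real_diag e ** adjoint_mat V"
    "matfun g A = V ** real_diag (\<lambda>i. g (e i)) ** adjoint_mat V" by blast
  thus ?thesis using unitary_diag_conj_fun_eq[OF U, of V d e g] A by simp
qed

lemma matfun_mat_1: "matfun g (mat 1) = real_diag (\<lambda>i. g 1)"
proof -
  have "mat 1 = mat 1 ** real_diag (\<lambda>i. 1) ** adjoint_mat (mat 1)"
    by (simp add: real_diag_1)
  from matfun_unitary_diag[OF unitary_mat_1 _ this] show ?thesis by simp
qed

lemma cinner_unitary_diag:
  assumes "unitary_mat U"
  shows "cinner x ((U ** real_diag d ** adjoint_mat U) *v x)
    = complex_of_real (\<Sum>j\<in>UNIV. d j * (cmod ((adjoint_mat U *v x)$j))\<^sup>2)"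
proof -
  let ?y = "adjoint_mat U *v x"
  have "(real_diag d *v ?y) $ j = complex_of_real (d j) * ?y $ j" for j
  proof -
    have "\<And>k. real_diag d $ j $ k * ?y $ k = (if k = j then complex_of_real (d j) * ?y $ j else 0)"
      unfolding real_diag_def by simp
    thus ?thesis unfolding matrix_vector_mult_def by simp
  qed
  hence "cinner ?y (real_diag d *v ?y) = (\<Sum>j\<in>UNIV. complex_of_real (d j) * (cnj (?y$j) * ?y$j))"
    unfolding cinner_def by (intro sum.cong refl) (simp add: mult.left_commute)
  also have "\<dots> = complex_of_real (\<Sum>j\<in>UNIV. d j * (cmod (?y$j))\<^sup>2)"
    by (simp only: cnj_mult_self of_real_sum of_real_mult)
  moreover have "(U ** real_diag d ** adjoint_mat U) *v x = U *v (real_diag d *v ?y)"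
    by (simp add: matrix_vector_mul_assoc matrix_mul_assoc)
  ultimately show ?thesis by (simp add: cinner_adjoint_mat)
qed

lemma quad_form_unitary_diag:
  "unitary_mat U \<Longrightarrow> quad_form (U ** real_diag d ** adjoint_mat U) x
    = (\<Sum>j\<in>UNIV. d j * (cmod ((adjoint_mat U *v x)$j))\<^sup>2)"
  unfolding quad_form_def by (simp add: cinner_unitary_diag)

lemma psd_unitary_diag:
  "unitary_mat U \<Longrightarrow> \<forall>i. d i \<ge> 0 \<Longrightarrow> psd (U ** real_diag d ** adjoint_mat U)"
  unfolding psd_iff_cinner by (simp add: cinner_unitary_diag sum_nonneg)

lemma psd_unitary_diagonalization:
  assumes "psd (A::complex^'n::finite^'n)"
  shows "\<exists>U d. unitary_mat U \<and> (\<forall>i. d i \<ge> 0) \<and> A = U ** real_diag d ** adjoint_mat U"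
proof -
  obtain u \<mu> where f: "spectral_family A CARD('n) u \<mu>"
    using spectral_family_exists[OF psd_imp_hermitian[OF assms]] by blast
  obtain ix :: "'n \<Rightarrow> nat" where ix: "bij_betw ix UNIV {..<CARD('n)}"
    using ex_bij_betw_finite_nat[of "UNIV::'n set"] by (auto simp: atLeast0LessThan)
  have "\<forall>c. \<mu> (ix c) \<ge> 0"
    using spectral_family_nonneg[OF f assms] ix by (auto simp: bij_betw_def)
  with spectral_family_diagonalizes[OF f ix] show ?thesis
    by (intro exI[of _ "\<chi> r c. u (ix c) $ r"] exI[of _ "\<lambda>c. \<mu> (ix c)"]) simp
qed

section \<open>Real inequalities\<close>

lemma power_mean_inequality:
  fixes w a :: "'i \<Rightarrow> real"
  assumes fin: "finite I" and p: "p > 1" and w: "\<forall>j\<in>I. w j \<ge> 0" and ws: "(\<Sum>j\<in>I. w j) = 1"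
    and a: "\<forall>j\<in>I. a j \<ge> 0"
  shows "(\<Sum>j\<in>I. w j * a j) \<le> (\<Sum>j\<in>I. w j * a j powr p) powr (1/p)"
proof -
  define q where "q = p / (p - 1)"
  have q: "q > 1" "1/p + 1/q = 1" using p unfolding q_def by (auto simp: field_simps)
  define M where "M = (\<Sum>j\<in>I. w j * a j powr p) powr (1/p)"
  have S0: "(\<Sum>j\<in>I. w j * a j powr p) \<ge> 0" using w a by (intro sum_nonneg) auto
  show ?thesis
  proof (cases "(\<Sum>j\<in>I. w j * a j powr p) = 0")
    case True
    hence "\<forall>j\<in>I. w j * a j powr p = 0"
      using sum_nonneg_eq_0_iff[OF fin, of "\<lambda>j. w j * a j powr p"] w a by auto
    hence "(\<Sum>j\<in>I. w j * a j) = 0" using p by (intro sum.neutral) auto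
    thus ?thesis using True by simp
  next
    case False
    hence Spos: "(\<Sum>j\<in>I. w j * a j powr p) > 0" using S0 by simp
    hence Mpos: "M > 0" unfolding M_def by simp
    have Mp: "M powr p = (\<Sum>j\<in>I. w j * a j powr p)"
      unfolding M_def using S0 p by (simp add: powr_powr)
    have "(\<Sum>j\<in>I. w j * (a j / M)) \<le> (\<Sum>j\<in>I. w j * ((a j / M) powr p / p + 1 powr q / q))"
    proof (rule sum_mono)
      fix j assume j: "j \<in> I"
      have "a j / M * 1 \<le> (a j / M) powr p / p + 1 powr q / q"
        by (rule Youngs_inequality[OF p q(1) q(2)]) (use a j Mpos in auto)
      thus "w j * (a j / M) \<le> w j * ((a j / M) powr p / p + 1 powr q / q)"
        using w j by (intro mult_left_mono) auto
    qed
    also have "\<dots> = (\<Sum>j\<in>I. w j * a j powr p) / (p * M powr p) + (\<Sum>j\<in>I. w j) / q"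
      using Mpos a by (simp add: sum_divide_distrib sum.distrib distrib_left powr_divide
          field_simps sum_distrib_left)
    also have "\<dots> = 1" using Mp Spos ws q p by simp
    finally have "(\<Sum>j\<in>I. w j * a j) / M \<le> 1"
      by (simp add: sum_divide_distrib)
    thus ?thesis using Mpos unfolding M_def by simp
  qed
qed

text \<open>Look at the leftmost point of maximum of \<open>\<phi>\<close>: it lies strictly inside, and midpoint
  convexity at it would make the maximum strictly smaller.\<close>
lemma continuous_midpoint_convex_nonpos:
  fixes \<phi> :: "real \<Rightarrow> real"
  assumes cont: "continuous_on {0..1} \<phi>" and ends: "\<phi> 0 = 0" "\<phi> 1 = 0"
    and mid: "\<And>a b. a \<in> {0..1} \<Longrightarrow> b \<in> {0..1} \<Longrightarrow> \<phi> ((a + b) / 2) \<le> (\<phi> a + \<phi> b) / 2"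
    and \<theta>: "\<theta> \<in> {0..1}"
  shows "\<phi> \<theta> \<le> 0"
proof (rule ccontr)
  assume "\<not> \<phi> \<theta> \<le> 0"
  obtain m where m: "m \<in> {0..1}" "\<forall>y\<in>{0..1}. \<phi> y \<le> \<phi> m"
    using continuous_attains_sup[OF compact_Icc _ cont] by auto
  define M where "M = \<phi> m"
  have Mpos: "M > 0" using m \<theta> \<open>\<not> \<phi> \<theta> \<le> 0\<close> unfolding M_def by force
  define S where "S = {t \<in> {0..1}. \<phi> t = M}"
  have "closed S" unfolding S_def by (rule continuous_closed_preimage_constant[OF cont]) simp
  hence "compact ({0..1} \<inter> S)" by (rule compact_Int_closed[OF compact_Icc])
  moreover have "{0..1} \<inter> S = S" unfolding S_def by auto
  ultimately have "compact S" by simp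
  moreover have "S \<noteq> {}" using m unfolding S_def M_def by auto
  ultimately obtain t where t: "t \<in> S" "\<forall>y\<in>S. t \<le> y"
    using continuous_attains_inf[OF _ _ continuous_on_id] by auto
  have "t \<in> {0..1}" "\<phi> t = M" using t unfolding S_def by auto
  hence t01: "0 < t" "t < 1" "\<phi> t = M" using ends Mpos by (auto simp: le_less)
  define d where "d = min t (1 - t)"
  have d: "d > 0" "t - d \<in> {0..1}" "t + d \<in> {0..1}" unfolding d_def using t01 by auto
  have "t - d \<notin> S" using t d by force
  hence "\<phi> (t - d) \<noteq> M" using d(2) unfolding S_def by auto
  moreover have "\<phi> (t - d) \<le> M" using d(2) m unfolding M_def by auto
  ultimately have "\<phi> (t - d) < M" by simp
  moreover have "\<phi> (t + d) \<le> M" using d(3) m unfolding M_def by auto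
  moreover have "\<phi> t \<le> (\<phi> (t - d) + \<phi> (t + d)) / 2"
    using mid[OF d(2,3)] by simp
  ultimately show False using t01 by simp
qed

lemma continuous_midpoint_convex_imp_convex:
  fixes h :: "real \<Rightarrow> real"
  assumes cont: "continuous_on UNIV h"
    and mid: "\<And>u v. h ((u + v) / 2) \<le> (h u + h v) / 2"
    and \<theta>: "0 \<le> \<theta>" "\<theta> \<le> 1"
  shows "h (\<theta> * u + (1 - \<theta>) * v) \<le> \<theta> * h u + (1 - \<theta>) * h v"
proof -
  define \<phi> where "\<phi> t = h (t * u + (1 - t) * v) - t * h u - (1 - t) * h v" for t
  have "\<phi> \<theta> \<le> 0"
  proof (rule continuous_midpoint_convex_nonpos[of \<phi>])
    show "continuous_on {0..1} \<phi>" unfolding \<phi>_def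
      by (intro continuous_intros continuous_on_compose2[OF cont]) auto
    fix a b :: real
    have "(a + b) / 2 * u + (1 - (a + b) / 2) * v = ((a * u + (1 - a) * v) + (b * u + (1 - b) * v)) / 2"
      by (simp add: field_simps)
    hence "h ((a + b) / 2 * u + (1 - (a + b) / 2) * v)
        \<le> (h (a * u + (1 - a) * v) + h (b * u + (1 - b) * v)) / 2"
      by (simp only: mid)
    moreover have "\<phi> ((a + b) / 2) - (\<phi> a + \<phi> b) / 2 = h ((a + b) / 2 * u + (1 - (a + b) / 2) * v)
        - (h (a * u + (1 - a) * v) + h (b * u + (1 - b) * v)) / 2"
      unfolding \<phi>_def by (simp add: field_simps)
    ultimately show "\<phi> ((a + b) / 2) \<le> (\<phi> a + \<phi> b) / 2" by linarith
  qed (use \<theta> in \<open>simp_all add: \<phi>_def\<close>)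
  thus ?thesis unfolding \<phi>_def by simp
qed

lemma geom_convex_nonneg: "geom_convex g \<Longrightarrow> x \<ge> 0 \<Longrightarrow> g x \<ge> 0"
  unfolding geom_convex_def by auto

lemma geom_convex_mono_zero:
  assumes gc: "geom_convex g" and mo: "mono_on {0..} g" and c: "c > 0" "g c = 0" and x: "x \<ge> 0"
  shows "g x = 0"
proof (cases "x \<le> c")
  case True
  thus ?thesis using mono_onD[OF mo, of x c] c x geom_convex_nonneg[OF gc x] by auto
next
  case False
  hence "x > 0" using c by simp
  have "sqrt (c * (x\<^sup>2 / c)) = x" using c \<open>x > 0\<close> by (simp add: power2_eq_square)
  hence "g x \<le> sqrt (g c * g (x\<^sup>2 / c))"
    using gc c \<open>x > 0\<close> unfolding geom_convex_def by (metis divide_pos_pos zero_less_power)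
  thus ?thesis using c geom_convex_nonneg[OF gc x] by simp
qed

text \<open>Geometric convexity of a positive \<open>g\<close> is midpoint convexity of \<open>ln \<circ> g \<circ> exp\<close>.\<close>
lemma geom_convex_powr:
  assumes gc: "geom_convex g" and gpos: "\<And>x. x > 0 \<Longrightarrow> g x > 0"
    and ab: "a > 0" "b > 0" and \<theta>: "0 \<le> \<theta>" "\<theta> \<le> 1"
  shows "g (a powr \<theta> * b powr (1 - \<theta>)) \<le> g a powr \<theta> * g b powr (1 - \<theta>)"
proof -
  define h where "h u = ln (g (exp u))" for u
  have ch: "continuous_on UNIV h" unfolding h_def
  proof (intro continuous_on_ln ballI)
    show "continuous_on UNIV (\<lambda>x. g (exp x))"
      using gc unfolding geom_convex_def
      by (intro continuous_on_compose2[OF _ continuous_on_exp[OF continuous_on_id]]) auto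
    fix x show "g (exp x) \<noteq> 0" using gpos[of "exp x"] by simp
  qed
  have mid: "h ((u + v) / 2) \<le> (h u + h v) / 2" for u v
  proof -
    have e: "exp ((u + v) / 2) = sqrt (exp u * exp v)"
      by (rule real_sqrt_unique[symmetric]) (simp_all add: power2_eq_square flip: exp_add)
    have "g (exp ((u + v) / 2)) \<le> sqrt (g (exp u) * g (exp v))"
      using gc unfolding e geom_convex_def by simp
    moreover have "0 < g (exp ((u + v) / 2))" "0 < sqrt (g (exp u) * g (exp v))" using gpos by auto
    ultimately have "ln (g (exp ((u + v) / 2))) \<le> ln (sqrt (g (exp u) * g (exp v)))"
      by simp
    also have "\<dots> = (h u + h v) / 2"
      unfolding h_def using gpos[of "exp u"] gpos[of "exp v"] by (simp add: ln_sqrt ln_mult)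
    finally show ?thesis unfolding h_def .
  qed
  have "h (\<theta> * ln a + (1 - \<theta>) * ln b) \<le> \<theta> * h (ln a) + (1 - \<theta>) * h (ln b)"
    by (rule continuous_midpoint_convex_imp_convex[OF ch mid \<theta>])
  hence "exp (h (\<theta> * ln a + (1 - \<theta>) * ln b)) \<le> exp (\<theta> * h (ln a) + (1 - \<theta>) * h (ln b))"
    by simp
  moreover have "exp (h (\<theta> * ln a + (1 - \<theta>) * ln b)) = g (a powr \<theta> * b powr (1 - \<theta>))"
    unfolding h_def using ab gpos by (simp add: powr_def exp_add mult.commute)
  moreover have "exp (\<theta> * h (ln a) + (1 - \<theta>) * h (ln b)) = g a powr \<theta> * g b powr (1 - \<theta>)"
    unfolding h_def using ab gpos[of a] gpos[of b] by (simp add: powr_def exp_add mult.commute)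
  ultimately show ?thesis by simp
qed

lemma conjugate_exponent_gt_1:
  fixes p q :: real
  assumes "p > 1" and "1 / p + 1 / q = 1"
  shows "q > 1"
proof -
  have "1/q = 1 - 1/p" using assms(2) by simp
  moreover have "0 < 1/p" "1/p < 1" using assms(1) by auto
  ultimately have "0 < 1/q" "1/q < 1" by auto
  thus ?thesis by (simp add: divide_less_eq zero_less_divide_1_iff)
qed

lemma geom_convex_mono_powr_bound:
  fixes p q s t :: real
  assumes p: "p > 1" and pq: "1 / p + 1 / q = 1" and gc: "geom_convex g" and mo: "mono_on {0..} g"
    and s: "s \<ge> 0" and t: "t \<ge> 0" and st: "s \<le> t powr (1/p)"
  shows "g s \<le> g 1 powr (1/q) * g t powr (1/p)"
proof -
  have q1: "1/q = 1 - 1/p" using pq by simp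
  show ?thesis
  proof (cases "\<exists>c>0. g c = 0")
    case True
    thus ?thesis using geom_convex_mono_zero[OF gc mo _ _ s] by auto
  next
    case False
    hence gpos: "\<And>x. x > 0 \<Longrightarrow> g x > 0" using geom_convex_nonneg[OF gc] by (metis less_eq_real_def)
    show ?thesis
    proof (cases "t = 0")
      case True
      hence "s = 0" using s st by simp
      have g0: "0 \<le> g 0" "g 0 \<le> g 1"
        using geom_convex_nonneg[OF gc, of 0] mono_onD[OF mo, of 0 1] by auto
      have "g 0 = g 0 powr (1/q) * g 0 powr (1/p)"
        using pq g0 by (cases "g 0 = 0") (simp_all add: powr_add[symmetric] add.commute)
      also have "\<dots> \<le> g 1 powr (1/q) * g 0 powr (1/p)"
        using g0 conjugate_exponent_gt_1[OF p pq] by (intro mult_right_mono powr_mono2) auto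
      finally show ?thesis using \<open>s = 0\<close> \<open>t = 0\<close> by simp
    next
      case False
      hence "t > 0" using t by simp
      have "g s \<le> g (t powr (1/p) * 1 powr (1 - 1/p))"
        using mono_onD[OF mo, of s "t powr (1/p)"] s st by simp
      also have "\<dots> \<le> g t powr (1/p) * g 1 powr (1 - 1/p)"
        by (rule geom_convex_powr[OF gc gpos \<open>t > 0\<close>]) (use p in auto)
      finally show ?thesis by (simp add: q1 mult.commute)
    qed
  qed
qed

section \<open>Symmetric norms on diagonal matrices\<close>

lemma symmetric_norm_scaleR:
  assumes "symmetric_norm N"
  shows "N (r *\<^sub>R A) = \<bar>r\<bar> * N A"
proof -
  have "(r *\<^sub>R A)$i$j = complex_of_real r * A$i$j" for i j
    by (simp add: scaleR_conv_of_real[symmetric])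
  hence "cscale_mat (complex_of_real r) A = r *\<^sub>R A"
    unfolding cscale_mat_def by (simp add: vec_eq_iff)
  thus ?thesis using assms unfolding symmetric_norm_def by (metis norm_of_real)
qed

lemma symmetric_norm_unitary_diag:
  assumes "symmetric_norm N" "unitary_mat U"
  shows "N (U ** real_diag d ** adjoint_mat U) = N (real_diag d)"
  using assms unitary_mat_adjoint_mat unfolding symmetric_norm_def by blast

text \<open>Flipping the sign of the \<open>j\<close>-th diagonal entry is a unitary similarity, and averaging the two
  matrices with weights \<open>(1 \<pm> \<theta>)/2\<close> shrinks the \<open>j\<close>-th entry by the factor \<open>\<theta>\<close>.\<close>
lemma symmetric_norm_real_diag_shrink_entry:
  assumes N: "symmetric_norm N" and z: "\<forall>i. z i \<ge> 0" and c: "0 \<le> c" "c \<le> z j"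
  shows "N (real_diag (z(j := c))) \<le> N (real_diag z)"
proof (cases "z j = 0")
  case True
  hence "z(j := c) = z" using c by auto
  thus ?thesis by simp
next
  case False
  hence zj: "z j > 0" using z by (metis less_eq_real_def)
  define \<theta> where "\<theta> = c / z j"
  have \<theta>: "0 \<le> \<theta>" "\<theta> \<le> 1" unfolding \<theta>_def using c zj by auto
  define e where "e i = (if i = j then -1 else (1::real))" for i
  define E where "E = real_diag e"
  have "(\<lambda>i. e i * e i) = (\<lambda>i. 1)" unfolding e_def by auto
  hence EU: "unitary_mat E" unfolding unitary_mat_def E_def
    by (simp add: real_diag_mult real_diag_1)
  have "z(j := c) = (\<lambda>i. (1 + \<theta>) / 2 * z i + (1 - \<theta>) / 2 * (e i * z i))"
    using zj by (auto simp: \<theta>_def e_def field_simps)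
  hence split: "real_diag (z(j := c))
      = ((1 + \<theta>)/2) *\<^sub>R real_diag z + ((1 - \<theta>)/2) *\<^sub>R (E ** real_diag z ** mat 1)"
    unfolding E_def by (simp add: real_diag_mult real_diag_lincomb)
  have "N (real_diag (z(j := c)))
      \<le> N (((1 + \<theta>)/2) *\<^sub>R real_diag z) + N (((1 - \<theta>)/2) *\<^sub>R (E ** real_diag z ** mat 1))"
    unfolding split using N unfolding symmetric_norm_def by blast
  also have "\<dots> = (1 + \<theta>)/2 * N (real_diag z) + (1 - \<theta>)/2 * N (real_diag z)"
  proof -
    have "N (E ** real_diag z ** mat 1) = N (real_diag z)"
      using N EU unitary_mat_1 unfolding symmetric_norm_def by blast
    thus ?thesis using \<theta> unfolding symmetric_norm_scaleR[OF N] by simp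
  qed
  also have "\<dots> = N (real_diag z)" by (simp add: field_simps)
  finally show ?thesis .
qed

lemma symmetric_norm_real_diag_mono:
  assumes N: "symmetric_norm N" and y: "\<forall>i. 0 \<le> y i" and yw: "\<forall>i. y i \<le> w i"
  shows "N (real_diag y) \<le> N (real_diag (w :: 'n::finite \<Rightarrow> real))"
proof -
  have "N (real_diag (\<lambda>i. if i \<in> F then y i else w i)) \<le> N (real_diag w)" if "finite F" for F
    using that
  proof (induct F rule: finite_induct)
    case (insert j F)
    define z where "z i = (if i \<in> F then y i else w i)" for i
    have "(\<lambda>i. if i \<in> insert j F then y i else w i) = z(j := y j)"
      unfolding z_def by auto
    moreover have "N (real_diag (z(j := y j))) \<le> N (real_diag z)"
      using y yw insert(2) unfolding z_def
      by (intro symmetric_norm_real_diag_shrink_entry[OF N]) (auto intro: order_trans)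
    ultimately show ?case using insert(3) unfolding z_def by simp
  qed simp
  from this[of UNIV] show ?thesis by simp
qed

lemma young_powr_normalized:
  fixes p q a b \<alpha> \<beta> :: real
  assumes p: "p > 1" and pq: "1 / p + 1 / q = 1" and a: "a \<ge> 0" and b: "b \<ge> 0"
    and \<alpha>: "\<alpha> > 0" and \<beta>: "\<beta> > 0"
  shows "a powr (1/q) * b powr (1/p) \<le> \<alpha> powr (1/p) * \<beta> powr (1/q) * (b / (p * \<alpha>) + a / (q * \<beta>))"
proof (cases "a = 0 \<or> b = 0")
  case True
  thus ?thesis using a b \<alpha> \<beta> p conjugate_exponent_gt_1[OF p pq] by auto
next
  case False
  hence "a > 0" "b > 0" using a b by auto
  have "(b/\<alpha>) powr (1/p) * (a/\<beta>) powr (1/q) \<le> (1/p) * (b/\<alpha>) + (1/q) * (a/\<beta>)"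
    by (rule Youngs_inequality_0)
      (use p conjugate_exponent_gt_1[OF p pq] pq \<open>a > 0\<close> \<open>b > 0\<close> \<alpha> \<beta> in auto)
  hence "\<alpha> powr (1/p) * \<beta> powr (1/q) * ((b/\<alpha>) powr (1/p) * (a/\<beta>) powr (1/q))
      \<le> \<alpha> powr (1/p) * \<beta> powr (1/q) * (b / (p * \<alpha>) + a / (q * \<beta>))"
    by (intro mult_left_mono) auto
  thus ?thesis using \<alpha> \<beta> \<open>a > 0\<close> \<open>b > 0\<close> by (simp add: powr_divide mult.commute)
qed

lemma symmetric_norm_real_diag_holder:
  assumes N: "symmetric_norm N" and p: "p > 1" and pq: "1 / p + 1 / q = 1"
    and a: "\<forall>c. a c \<ge> 0" and b: "\<forall>c. b c \<ge> 0" and y: "\<forall>c. y c \<ge> 0"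
    and yab: "\<forall>c. y c \<le> a c powr (1/q) * b c powr (1/p)"
  shows "N (real_diag (y :: 'n::finite \<Rightarrow> real))
    \<le> N (real_diag a) powr (1/q) * N (real_diag b) powr (1/p)"
proof -
  have Nnonneg: "N A \<ge> 0" and N0: "N A = 0 \<longleftrightarrow> A = 0" and Ntri: "N (A + B) \<le> N A + N B"
    for A B :: "complex^'n^'n"
    using N unfolding symmetric_norm_def by auto
  define \<alpha> where "\<alpha> = N (real_diag b)"
  define \<beta> where "\<beta> = N (real_diag a)"
  show ?thesis
  proof (cases "\<alpha> = 0 \<or> \<beta> = 0")
    case True
    hence "\<forall>c. y c = 0"
      using y yab unfolding \<alpha>_def \<beta>_def N0 real_diag_eq_0_iff by (metis mult_zero_left
          mult_zero_right order_antisym_conv powr_zero_eq_one zero_neq_one powr_0)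
    moreover have "N 0 = 0" using N0 by blast
    ultimately show ?thesis by (simp add: real_diag_eq_0_iff[of y, symmetric])
  next
    case False
    hence \<alpha>\<beta>: "\<alpha> > 0" "\<beta> > 0" unfolding \<alpha>_def \<beta>_def by (metis Nnonneg less_eq_real_def)+
    define K where "K = \<alpha> powr (1/p) * \<beta> powr (1/q)"
    have "K \<ge> 0" unfolding K_def by simp
    have "y c \<le> K / (p * \<alpha>) * b c + K / (q * \<beta>) * a c" for c
    proof -
      have "y c \<le> a c powr (1/q) * b c powr (1/p)" using yab by blast
      also have "\<dots> \<le> K * (b c / (p * \<alpha>) + a c / (q * \<beta>))"
        unfolding K_def by (rule young_powr_normalized[OF p pq a[rule_format] b[rule_format] \<alpha>\<beta>])
      also have "\<dots> = K / (p * \<alpha>) * b c + K / (q * \<beta>) * a c" by (simp add: field_simps)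
      finally show ?thesis .
    qed
    hence "N (real_diag y) \<le> N (real_diag (\<lambda>c. K / (p * \<alpha>) * b c + K / (q * \<beta>) * a c))"
      by (intro symmetric_norm_real_diag_mono[OF N y]) auto
    also have "\<dots> \<le> N ((K / (p * \<alpha>)) *\<^sub>R real_diag b) + N ((K / (q * \<beta>)) *\<^sub>R real_diag a)"
      by (metis Ntri real_diag_lincomb)
    also have "\<dots> = K * (1/p + 1/q)"
      using \<open>K \<ge> 0\<close> p \<alpha>\<beta> conjugate_exponent_gt_1[OF p pq]
      unfolding symmetric_norm_scaleR[OF N] \<alpha>_def[symmetric] \<beta>_def[symmetric]
      by (simp add: field_simps)
    finally show ?thesis unfolding K_def pq \<alpha>_def \<beta>_def by (simp add: mult.commute)
  qed
qed

section \<open>Eigenvalue comparison\<close>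

lemma psd_mat_powr:
  assumes "psd A"
  shows "psd (mat_powr A p)"
proof -
  obtain U d where "unitary_mat U" "\<forall>i. d i \<ge> 0" "A = U ** real_diag d ** adjoint_mat U"
    using psd_unitary_diagonalization[OF assms] by blast
  thus ?thesis
    unfolding mat_powr_def by (simp add: matfun_unitary_diag psd_unitary_diag)
qed

lemma quad_form_mat_powr_jensen:
  assumes A: "psd A" and p: "p > 1" and x: "norm x = 1"
  shows "quad_form A x \<le> (quad_form (mat_powr A p) x) powr (1/p)"
proof -
  obtain U d where U: "unitary_mat U" and d: "\<forall>i. d i \<ge> 0"
    and Ad: "A = U ** real_diag d ** adjoint_mat U"
    using psd_unitary_diagonalization[OF A] by blast
  have Ap: "mat_powr A p = U ** real_diag (\<lambda>i. d i powr p) ** adjoint_mat U"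
    unfolding mat_powr_def by (rule matfun_unitary_diag[OF U d Ad])
  define w where "w j = (cmod ((adjoint_mat U *v x)$j))\<^sup>2" for j
  have "(\<Sum>j\<in>UNIV. w j) = (norm (adjoint_mat U *v x))\<^sup>2"
    unfolding w_def by (simp add: norm_vec_def L2_set_def sum_nonneg)
  also have "\<dots> = 1"
    using unitary_mat_cinner[OF unitary_mat_adjoint_mat[OF U], of x x] x
    by (metis Re_cinner_self power_one)
  finally have "(\<Sum>j\<in>UNIV. w j * d j) \<le> (\<Sum>j\<in>UNIV. w j * d j powr p) powr (1/p)"
    using d by (intro power_mean_inequality[OF finite p]) (auto simp: w_def)
  thus ?thesis
    unfolding Ap unfolding Ad quad_form_unitary_diag[OF U] w_def by (simp add: mult.commute)
qed

lemma quad_form_mean_le_powr_mean: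
  assumes I: "finite I" and A: "\<forall>i\<in>I. psd (A i)" and l: "\<forall>i\<in>I. l i \<ge> 0"
    and lsum: "(\<Sum>i\<in>I. l i) = 1" and p: "p > 1" and x: "norm x = 1"
  shows "quad_form (\<Sum>i\<in>I. l i *\<^sub>R A i) x
    \<le> quad_form (\<Sum>i\<in>I. l i *\<^sub>R mat_powr (A i) p) x powr (1/p)"
proof -
  define b where "b i = quad_form (mat_powr (A i) p) x" for i
  have b: "\<forall>i\<in>I. b i \<ge> 0"
    using A psd_mat_powr psd_quad_form_nonneg unfolding b_def by blast
  have "quad_form (\<Sum>i\<in>I. l i *\<^sub>R A i) x \<le> (\<Sum>i\<in>I. l i * b i powr (1/p))"
    unfolding quad_form_sum_scaleR b_def
    using quad_form_mat_powr_jensen[OF _ p x] A l by (intro sum_mono mult_left_mono) auto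
  also have "\<dots> \<le> (\<Sum>i\<in>I. l i * (b i powr (1/p)) powr p) powr (1/p)"
    using l lsum by (intro power_mean_inequality[OF I p]) auto
  also have "(\<Sum>i\<in>I. l i * (b i powr (1/p)) powr p) = (\<Sum>i\<in>I. l i * b i)"
    using b p by (intro sum.cong refl) (simp add: powr_powr)
  finally show ?thesis unfolding quad_form_sum_scaleR b_def .
qed

lemma exists_unit_in_span_orthogonal:
  fixes u v :: "nat \<Rightarrow> complex^'n::finite"
  assumes u: "\<forall>i\<le>k. \<forall>j\<le>k. cinner (u i) (u j) = (if i = j then 1 else 0)"
    and v: "\<forall>i<k. \<forall>j<k. cinner (v i) (v j) = (if i = j then 1 else 0)"
  shows "\<exists>x c. x = (\<Sum>j\<le>k. c j *s u j) \<and> cinner x x = 1 \<and> (\<forall>j<k. cinner (v j) x = 0)"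
proof -
  have "\<forall>i<Suc k. \<forall>j<Suc k. cinner (u i) (u j) = (if i = j then 1 else 0)"
    using u by (simp add: less_Suc_eq_le)
  note fu = orthonormal_set_image[OF this] and fv = orthonormal_set_image[OF v]
  define W where "W = vec.span (u ` {..<Suc k})"
  have "vec.dim W = Suc k"
    unfolding W_def using orthonormal_set_independent[OF fu(2)] card_image[OF fu(1)]
    by (simp add: vec.dim_eq_card_independent)
  then obtain x where xW: "x \<in> W" and x0: "x \<noteq> 0" and xv: "\<forall>b\<in>v ` {..<k}. cinner b x = 0"
    using subspace_has_orthogonal_vector[OF fv(2) _ vec.subspace_span, of "u ` {..<Suc k}"]
      card_image[OF fv(1)] unfolding W_def by auto
  define x1 where "x1 = complex_of_real (1 / norm x) *s x"
  have "x1 \<in> vec.span (u ` {..<Suc k})"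
    unfolding x1_def using xW unfolding W_def by (rule vec.span_scale)
  hence "x1 = (\<Sum>b\<in>u ` {..<Suc k}. cinner b x1 *s b)"
    by (rule orthonormal_set_span_expansion[OF fu(2) finite_imageI[OF finite_lessThan]])
  hence "x1 = (\<Sum>j\<le>k. cinner (u j) x1 *s u j)"
    using sum.reindex[OF fu(1), of "\<lambda>b. cinner b x1 *s b"] by (simp add: lessThan_Suc_atMost)
  moreover have "\<forall>j<k. cinner (v j) x1 = 0" using xv unfolding x1_def by (simp add: cinner_scale_right)
  ultimately show ?thesis
    using cinner_normalize_self[OF x0] unfolding x1_def[symmetric]
    by (intro exI[of _ x1] exI[of _ "\<lambda>j. cinner (u j) x1"]) simp
qed

lemma quad_form_eigen_expansion:
  fixes u :: "nat \<Rightarrow> complex^'n::finite" and \<mu> :: "nat \<Rightarrow> real"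
  assumes u: "\<forall>i\<le>k. \<forall>j\<le>k. cinner (u i) (u j) = (if i = j then 1 else 0)"
    and eig: "\<forall>j\<le>k. H *v u j = complex_of_real (\<mu> j) *s u j"
  shows "quad_form H (\<Sum>j\<le>k. c j *s u j) = (\<Sum>j\<le>k. \<mu> j * (cmod (c j))\<^sup>2)"
proof -
  define x where "x = (\<Sum>j\<le>k. c j *s u j)"
  define y where "y = (\<Sum>j\<le>k. (c j * complex_of_real (\<mu> j)) *s u j)"
  have "H *v x = y"
    unfolding x_def y_def matrix_vector_mult_sum using eig
    by (intro sum.cong refl) (simp add: vector_scalar_commute vector_smult_assoc mult.commute)
  hence "cinner x (H *v x) = (\<Sum>i\<le>k. cnj (c i) * cinner (u i) y)"
    unfolding x_def by (simp add: cinner_sum_left cinner_scale_left)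
  also have "\<dots> = (\<Sum>i\<le>k. complex_of_real (\<mu> i * (cmod (c i))\<^sup>2))"
  proof (intro sum.cong refl)
    fix i assume i: "i \<in> {..k}"
    have "cinner (u i) y = (\<Sum>j\<le>k. (c j * complex_of_real (\<mu> j)) * cinner (u i) (u j))"
      unfolding y_def by (simp add: cinner_sum_right cinner_scale_right)
    also have "\<dots> = (\<Sum>j\<le>k. if j = i then c i * complex_of_real (\<mu> i) else 0)"
      using u i by (intro sum.cong refl) auto
    finally have "cinner (u i) y = complex_of_real (\<mu> i) * c i" using i by simp
    hence "cnj (c i) * cinner (u i) y = complex_of_real (\<mu> i) * (cnj (c i) * c i)"
      by (simp add: mult_ac)
    thus "cnj (c i) * cinner (u i) y = complex_of_real (\<mu> i * (cmod (c i))\<^sup>2)"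
      by (simp only: cnj_mult_self of_real_mult)
  qed
  finally show ?thesis unfolding quad_form_def x_def by (simp flip: of_real_sum)
qed

text \<open>Min-max: the \<open>k\<close>-th largest eigenvalue of \<open>S\<close> is at most the value of the Rayleigh quotient
  of \<open>S\<close> at some unit vector orthogonal to the top \<open>k\<close> eigenvectors of \<open>P\<close>, and the Rayleigh
  quotient of \<open>P\<close> there is at most its \<open>k\<close>-th largest eigenvalue.\<close>
lemma spectral_family_compare:
  fixes S P :: "complex^'n::finite^'n"
  assumes fS: "spectral_family S CARD('n) u s" and fP: "spectral_family P CARD('n) v t"
    and k: "k < CARD('n)" and f: "mono_on {0..} f"
    and hyp: "\<And>x. norm x = 1 \<Longrightarrow> quad_form S x \<le> f (quad_form P x)"
    and P: "psd P"
  shows "s k \<le> f (t k)"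
proof -
  have u: "\<forall>i\<le>k. \<forall>j\<le>k. cinner (u i) (u j) = (if i = j then 1 else 0)"
    and eig: "\<forall>j\<le>k. S *v u j = complex_of_real (s j) *s u j"
    using fS k unfolding spectral_family_def by auto
  have v: "\<forall>i<k. \<forall>j<k. cinner (v i) (v j) = (if i = j then 1 else 0)"
    using fP k unfolding spectral_family_def by auto
  obtain x c where x: "x = (\<Sum>j\<le>k. c j *s u j)" "cinner x x = 1" "\<forall>j<k. cinner (v j) x = 0"
    using exists_unit_in_span_orthogonal[OF u v] by blast
  have "quad_form (mat 1) x = 1" using x(2) by (simp add: cinner_self_eq_1_iff)
  hence c1: "(\<Sum>j\<le>k. (cmod (c j))\<^sup>2) = 1"
    using quad_form_eigen_expansion[OF u, of "mat 1" "\<lambda>_. 1" c] x(1) by simp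
  have "s k = (\<Sum>j\<le>k. s k * (cmod (c j))\<^sup>2)" by (simp add: c1 flip: sum_distrib_left)
  also have "\<dots> \<le> (\<Sum>j\<le>k. s j * (cmod (c j))\<^sup>2)"
    using spectral_family_antimono[OF fS _ k] by (intro sum_mono mult_right_mono) auto
  also have "\<dots> = quad_form S x" unfolding x(1) by (rule quad_form_eigen_expansion[OF u eig, symmetric])
  also have "\<dots> \<le> f (quad_form P x)" using x(2) by (intro hyp) (simp add: cinner_self_eq_1_iff)
  also have "\<dots> \<le> f (t k)"
  proof (rule mono_onD[OF f])
    show "quad_form P x \<le> t k" using fP k x(2,3) unfolding spectral_family_def by blast
    show "quad_form P x \<in> {0..}" using psd_quad_form_nonneg[OF P] by simp
    show "t k \<in> {0..}" using spectral_family_nonneg[OF fP P k] by simp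
  qed
  finally show ?thesis .
qed

lemma psd_ordered_diagonalizations_compare:
  fixes S P :: "complex^'n::finite^'n"
  assumes S: "psd S" and P: "psd P" and f: "mono_on {0..} f"
    and hyp: "\<And>x. norm x = 1 \<Longrightarrow> quad_form S x \<le> f (quad_form P x)"
  shows "\<exists>U V s t. unitary_mat U \<and> unitary_mat V \<and> (\<forall>c. s c \<ge> 0) \<and> (\<forall>c. t c \<ge> 0)
    \<and> S = U ** real_diag s ** adjoint_mat U \<and> P = V ** real_diag t ** adjoint_mat V
    \<and> (\<forall>c. s c \<le> f (t c))"
proof -
  obtain u s where fS: "spectral_family S CARD('n) u s"
    using spectral_family_exists[OF psd_imp_hermitian[OF S]] by blast
  obtain v t where fP: "spectral_family P CARD('n) v t"
    using spectral_family_exists[OF psd_imp_hermitian[OF P]] by blast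
  obtain ix :: "'n \<Rightarrow> nat" where ix: "bij_betw ix UNIV {..<CARD('n)}"
    using ex_bij_betw_finite_nat[of "UNIV::'n set"] by (auto simp: atLeast0LessThan)
  have ixlt: "ix c < CARD('n)" for c using ix by (auto simp: bij_betw_def)
  show ?thesis
    using spectral_family_diagonalizes[OF fS ix] spectral_family_diagonalizes[OF fP ix]
      spectral_family_nonneg[OF fS S ixlt] spectral_family_nonneg[OF fP P ixlt]
      spectral_family_compare[OF fS fP ixlt f hyp P]
    by (intro exI[of _ "\<chi> r c. u (ix c) $ r"] exI[of _ "\<chi> r c. v (ix c) $ r"]
        exI[of _ "\<lambda>c. s (ix c)"] exI[of _ "\<lambda>c. t (ix c)"]) simp
qed

theorem corollary1p5:
  fixes A :: "nat \<Rightarrow> complex^'n::finite^'n" and l :: "nat \<Rightarrow> real"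
    and m :: nat and p q :: real
    and N :: "complex^'n^'n \<Rightarrow> real" and g :: "real \<Rightarrow> real"
  assumes "\<forall>i<m. psd (A i)"
    and "\<forall>i<m. l i > 0"
    and "(\<Sum>i<m. l i) = 1"
    and "p > 1" and "1 / p + 1 / q = 1"
    and "symmetric_norm N"
    and "mono_on {0..} g" and "geom_convex g"
  shows "N (matfun g (\<Sum>i<m. l i *\<^sub>R A i))
    \<le> N (matfun g (mat 1)) powr (1 / q) * N (matfun g (\<Sum>i<m. l i *\<^sub>R mat_powr (A i) p)) powr (1 / p)"
proof -
  let ?S = "\<Sum>i<m. l i *\<^sub>R A i" and ?P = "\<Sum>i<m. l i *\<^sub>R mat_powr (A i) p"
  have "psd ?S" "psd ?P"
    using assms(1,2) psd_mat_powr by (auto intro!: psd_sum_scaleR)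
  moreover have "mono_on {0..} (\<lambda>t::real. t powr (1/p))"
    by (intro mono_onI powr_mono2) (use assms(4) in auto)
  moreover have "quad_form ?S x \<le> quad_form ?P x powr (1/p)" if "norm x = 1" for x
    using assms(1-4) that by (intro quad_form_mean_le_powr_mean) auto
  ultimately obtain U V s t where UV: "unitary_mat U" "unitary_mat V" "\<forall>c. s c \<ge> 0" "\<forall>c. t c \<ge> 0"
    "?S = U ** real_diag s ** adjoint_mat U" "?P = V ** real_diag t ** adjoint_mat V"
    and st: "\<forall>c. s c \<le> t c powr (1/p)"
    using psd_ordered_diagonalizations_compare[of ?S ?P] by blast
  have "N (real_diag (\<lambda>c. g (s c)))
      \<le> N (real_diag (\<lambda>c::'n. g 1)) powr (1/q) * N (real_diag (\<lambda>c. g (t c))) powr (1/p)"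
    using UV(3,4) st geom_convex_nonneg[OF assms(8)]
      geom_convex_mono_powr_bound[OF assms(4,5,8,7)]
    by (intro symmetric_norm_real_diag_holder[OF assms(6,4,5)]) auto
  thus ?thesis
    unfolding matfun_mat_1 matfun_unitary_diag[OF UV(1,3,5)] matfun_unitary_diag[OF UV(2,4,6)]
    using symmetric_norm_unitary_diag[OF assms(6) UV(1)] symmetric_norm_unitary_diag[OF assms(6) UV(2)]
    by simp
qed

end
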